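(* Let $V=\{v_1,\dots,v_m\}\subset\mathbb{R}^d$ be a finite set of points and $r\in\mathbb{R}^d$. Let $S\subset V$ be $r$-balanced and let $\{S_1,\dots,S_k\}$ be the family of all minimal $r$-balanced subsets of $S$. Then $S=\bigcup_{i=1}^k S_i$.
   Context: A subset $S\subset V$ is $r$-balanced if $r\in\mathrm{relint}(\mathrm{conv}(S))$ (relative interior within the affine hull of $S$); it is minimal $r$-balanced if it is $r$-balanced and no proper subset of it is $r$-balanced. *)

theory Defs
  imports "HOL-Analysis.Analysis"
begin

definition r_balanced :: "'a::euclidean_space \<Rightarrow> 'a set \<Rightarrow> bool" where
  "r_balanced r S \<longleftrightarrow> r \<in> rel_interior (convex hull S)"

definition minimal_r_balanced :: "'a::euclidean_space \<Rightarrow> 'a set \<Rightarrow> bool" where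
  "minimal_r_balanced r S \<longleftrightarrow> r_balanced r S \<and> (\<forall>T. T \<subset> S \<longrightarrow> \<not> r_balanced r T)"

end

theory Submission
  imports Defs
begin

text \<open>
  A finite set \<open>T\<close> is \<open>r\<close>-balanced iff \<open>r\<close> is a convex combination of \<open>T\<close> with strictly
  positive weights. If \<open>U \<subset> T\<close> is also balanced, with weights \<open>m\<close> (zero off \<open>U\<close>), then
  moving from \<open>m\<close> through the weights \<open>l\<close> of \<open>T\<close> and beyond, \<open>(1 + t) l - t m\<close>, keeps
  representing \<open>r\<close>, stays positive on \<open>T - U\<close>, and for the largest admissible \<open>t\<close> vanishes
  somewhere. Its support is a balanced proper subset of \<open>T\<close> containing \<open>T - U\<close>. Hence a
  point \<open>v\<close> of a balanced set lies in a smaller balanced subset unless the set is already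
  minimal, and induction on the set places \<open>v\<close> in a minimal balanced subset.
\<close>

lemma r_balanced_iff_positive_weights:
  fixes S :: "'a::euclidean_space set"
  assumes "finite S"
  shows "r_balanced r S \<longleftrightarrow>
    (\<exists>u. (\<forall>x\<in>S. 0 < u x) \<and> sum u S = 1 \<and> (\<Sum>x\<in>S. u x *\<^sub>R x) = r)"
proof -
  have "rel_interior (convex hull (\<Union>((\<lambda>x. {x}) ` S))) =
    {\<Sum>i\<in>S. c i *\<^sub>R s i | c s. (\<forall>i\<in>S. c i > 0) \<and> sum c S = 1 \<and>
      (\<forall>i\<in>S. s i \<in> rel_interior {i})}"
    by (rule rel_interior_convex_hull_union) (use assms in auto)
  then have rel_interior_eq: "rel_interior (convex hull S) =
    {\<Sum>i\<in>S. c i *\<^sub>R s i | c s. (\<forall>i\<in>S. c i > 0) \<and> sum c S = 1 \<and> (\<forall>i\<in>S. s i = i)}"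
    by simp
  show ?thesis
  proof
    assume "r_balanced r S"
    then obtain c s where "\<forall>i\<in>S. c i > 0" "sum c S = 1" "\<forall>i\<in>S. s i = i"
      "r = (\<Sum>i\<in>S. c i *\<^sub>R s i)"
      unfolding r_balanced_def rel_interior_eq by blast
    then show "\<exists>u. (\<forall>x\<in>S. 0 < u x) \<and> sum u S = 1 \<and> (\<Sum>x\<in>S. u x *\<^sub>R x) = r"
      by (intro exI[of _ c]) (auto intro: sum.cong)
  next
    assume "\<exists>u. (\<forall>x\<in>S. 0 < u x) \<and> sum u S = 1 \<and> (\<Sum>x\<in>S. u x *\<^sub>R x) = r"
    then show "r_balanced r S"
      unfolding r_balanced_def rel_interior_eq by (auto intro!: exI[of _ "\<lambda>x. x"])
  qed
qed

lemma r_balanced_support: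
  fixes T :: "'a::euclidean_space set"
  assumes "finite T" and "\<forall>x\<in>T. 0 \<le> w x" and "sum w T = 1" and "(\<Sum>x\<in>T. w x *\<^sub>R x) = r"
  shows "r_balanced r {x\<in>T. 0 < w x}"
proof -
  define W where "W = {x\<in>T. 0 < w x}"
  have "finite W" "W \<subseteq> T"
    using assms(1) unfolding W_def by auto
  have vanish: "\<forall>x\<in>T - W. w x = 0"
    using assms(2) unfolding W_def by (simp add: not_less order.antisym)
  have "sum w W = sum w T" and "(\<Sum>x\<in>W. w x *\<^sub>R x) = (\<Sum>x\<in>T. w x *\<^sub>R x)"
    using assms(1) \<open>W \<subseteq> T\<close> vanish by (auto intro: sum.mono_neutral_left)
  then have "r_balanced r W"
    unfolding r_balanced_iff_positive_weights[OF \<open>finite W\<close>] using assms(3,4)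
    by (intro exI[of _ w]) (simp add: W_def)
  then show ?thesis
    unfolding W_def .
qed

lemma extrapolation_hits_zero:
  fixes l m :: "'b \<Rightarrow> real"
  assumes "finite T" and l_pos: "\<forall>x\<in>T. 0 < l x" and "\<exists>x\<in>T. l x < m x"
  shows "\<exists>t>0. (\<forall>x\<in>T. t * m x \<le> (1 + t) * l x) \<and> (\<exists>x\<in>T. t * m x = (1 + t) * l x)"
proof -
  define D where "D = {x\<in>T. l x < m x}"
  define q where "q x = l x / (m x - l x)" for x
  define t where "t = Min (q ` D)"
  have "finite D" "D \<noteq> {}"
    using assms unfolding D_def by auto
  then have "t \<in> q ` D"
    unfolding t_def by (intro Min_in) auto
  then obtain x0 where "x0 \<in> D" and t_eq: "t = q x0"
    by blast
  have t_le: "t \<le> q x" if "x \<in> D" for x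
    using \<open>finite D\<close> that unfolding t_def by simp
  have "0 < t"
    using \<open>x0 \<in> D\<close> l_pos unfolding t_eq q_def D_def by auto
  have "t * m x \<le> (1 + t) * l x" if "x \<in> T" for x
  proof (cases "x \<in> D")
    case True
    then have "t * (m x - l x) \<le> l x"
      using t_le[OF True] unfolding q_def D_def by (simp add: pos_le_divide_eq)
    then show ?thesis by (simp add: algebra_simps)
  next
    case False
    then have "t * m x \<le> t * l x"
      using that \<open>0 < t\<close> unfolding D_def by simp
    moreover have "0 < l x"
      using l_pos that by blast
    ultimately show ?thesis
      by (simp add: algebra_simps)
  qed
  moreover have "x0 \<in> T" "t * m x0 = (1 + t) * l x0"
    using \<open>x0 \<in> D\<close> unfolding t_eq q_def D_def by (auto simp: field_simps)
  ultimately show ?thesis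
    using \<open>0 < t\<close> by blast
qed

lemma r_balanced_exchange:
  fixes T U :: "'a::euclidean_space set"
  assumes "finite T" and "U \<subset> T" and "r_balanced r T" and "r_balanced r U"
  obtains W where "T - U \<subseteq> W" and "W \<subset> T" and "r_balanced r W"
proof -
  have "finite U"
    using assms(1,2) finite_subset by blast
  obtain l where l_pos: "\<forall>x\<in>T. 0 < l x" and l_sum: "sum l T = 1"
    and l_comb: "(\<Sum>x\<in>T. l x *\<^sub>R x) = r"
    using assms(3) r_balanced_iff_positive_weights[OF assms(1)] by blast
  obtain \<mu> where \<mu>_sum: "sum \<mu> U = 1" and \<mu>_comb: "(\<Sum>x\<in>U. \<mu> x *\<^sub>R x) = r"
    using assms(4) r_balanced_iff_positive_weights[OF \<open>finite U\<close>] by blast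
  define m where "m x = (if x \<in> U then \<mu> x else 0)" for x
  have m_restrict: "(\<Sum>x\<in>T. f (m x) x) = (\<Sum>x\<in>U. f (\<mu> x) x)"
    if "\<And>x. f 0 x = 0" for f :: "real \<Rightarrow> 'a \<Rightarrow> 'c::comm_monoid_add"
    using assms(1,2) that by (intro sum.mono_neutral_cong_right) (auto simp: m_def)
  have m_sum: "sum m T = 1" and m_comb: "(\<Sum>x\<in>T. m x *\<^sub>R x) = r"
    using m_restrict[of "\<lambda>c x. c"] m_restrict[of "\<lambda>c x. c *\<^sub>R x"] \<mu>_sum \<mu>_comb by simp_all
  have "\<exists>x\<in>T. l x < m x"
  proof (rule ccontr)
    assume "\<not> ?thesis"
    moreover obtain y where "y \<in> T - U"
      using assms(2) by blast
    moreover have "m y < l y"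
      using \<open>y \<in> T - U\<close> l_pos unfolding m_def by simp
    ultimately have "sum m T < sum l T"
      by (intro sum_strict_mono_ex1[OF assms(1)]) (auto simp: not_less)
    with l_sum m_sum show False by simp
  qed
  then obtain t x0 where "0 < t" and le: "\<forall>x\<in>T. t * m x \<le> (1 + t) * l x"
    and "x0 \<in> T" and vanish: "t * m x0 = (1 + t) * l x0"
    using extrapolation_hits_zero[OF assms(1) l_pos] by blast
  define w where "w x = (1 + t) * l x - t * m x" for x
  have w_sum: "sum w T = 1"
    using l_sum m_sum unfolding w_def by (simp add: sum_subtractf sum_distrib_left[symmetric])
  have w_comb: "(\<Sum>x\<in>T. w x *\<^sub>R x) = r"
  proof -
    have "(\<Sum>x\<in>T. w x *\<^sub>R x) = (1 + t) *\<^sub>R (\<Sum>x\<in>T. l x *\<^sub>R x) - t *\<^sub>R (\<Sum>x\<in>T. m x *\<^sub>R x)"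
      unfolding w_def by (simp add: scaleR_diff_left sum_subtractf scaleR_sum_right)
    then show ?thesis
      using l_comb m_comb by (simp add: scaleR_add_left)
  qed
  have w_nonneg: "\<forall>x\<in>T. 0 \<le> w x"
    using le unfolding w_def by simp
  define W where "W = {x\<in>T. 0 < w x}"
  have "T - U \<subseteq> W"
    using l_pos \<open>0 < t\<close> unfolding W_def w_def m_def by auto
  moreover have "W \<subset> T"
  proof -
    have "x0 \<notin> W"
      using vanish unfolding W_def w_def by simp
    then show ?thesis
      using \<open>x0 \<in> T\<close> unfolding W_def by blast
  qed
  moreover have "r_balanced r W"
    unfolding W_def using r_balanced_support[OF assms(1) w_nonneg w_sum w_comb] .
  ultimately show ?thesis
    by (rule that)
qed

lemma exists_minimal_r_balanced_subset:
  fixes S :: "'a::euclidean_space set"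
  assumes "finite S" and "r_balanced r S" and "v \<in> S"
  shows "\<exists>T\<subseteq>S. v \<in> T \<and> minimal_r_balanced r T"
  using assms(1,2,3)
proof (induction S rule: finite_psubset_induct)
  case (psubset S)
  show ?case
  proof (cases "minimal_r_balanced r S")
    case True
    with psubset.prems show ?thesis by blast
  next
    case False
    then obtain U where "U \<subset> S" and "r_balanced r U"
      using psubset.prems(1) unfolding minimal_r_balanced_def by blast
    obtain W where "W \<subset> S" and "r_balanced r W" and "v \<in> W"
    proof (cases "v \<in> U")
      case True
      then show ?thesis
        by (rule that[OF \<open>U \<subset> S\<close> \<open>r_balanced r U\<close>])
    next
      case False
      obtain W where "S - U \<subseteq> W" "W \<subset> S" "r_balanced r W"
        using r_balanced_exchange[OF psubset.hyps(1) \<open>U \<subset> S\<close> psubset.prems(1) \<open>r_balanced r U\<close>] .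
      moreover have "v \<in> W"
        using False psubset.prems(2) \<open>S - U \<subseteq> W\<close> by blast
      ultimately show ?thesis
        by (intro that)
    qed
    then obtain T where "T \<subseteq> W" "v \<in> T" "minimal_r_balanced r T"
      using psubset.IH[OF \<open>W \<subset> S\<close> \<open>r_balanced r W\<close> \<open>v \<in> W\<close>] by blast
    then show ?thesis
      using \<open>W \<subset> S\<close> by blast
  qed
qed

theorem corollary1:
  fixes V S :: "'a::euclidean_space set" and r :: 'a
  assumes "finite V" and "S \<subseteq> V" and "r_balanced r S"
  shows "S = \<Union> {T. T \<subseteq> S \<and> minimal_r_balanced r T}"
proof
  show "\<Union> {T. T \<subseteq> S \<and> minimal_r_balanced r T} \<subseteq> S"
    by blast
  have "finite S"
    using assms(1,2) finite_subset by blast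
  then show "S \<subseteq> \<Union> {T. T \<subseteq> S \<and> minimal_r_balanced r T}"
    using exists_minimal_r_balanced_subset[OF _ assms(3)] by blast
qed

end
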